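(* For $n\ge 1$ let $a(n) = n - \lfloor \sqrt{n-1} \rfloor$. Then for every $n\ge 1$, $$\sum_{i=1}^n a(i) = \big|\{(x,y)\in \mathbb{Z}_{>0}\times\mathbb{Z}_{>0} : y \le x \le y^2 \text{ and } x\le n\}\big|.$$
   Context: $\mathbb{Z}_{>0}$ denotes the set of positive integers. (This $a(n)$ is the case $m=2$ of the sequence $n-h(n)$ where each $k\ge0$ appears $2k+1$ times in $h$, $h(1)=0$.) *)

theory Defs
  imports Complex_Main
begin

definition a_seq :: "nat \<Rightarrow> int" where
  "a_seq n = int n - \<lfloor>sqrt (real n - 1)\<rfloor>"

end

theory Submission
  imports Defs
begin

text \<open>
  Count the points column by column. For an integer \<open>x \<ge> 1\<close>, the heights \<open>y > 0\<close> with
  \<open>y \<le> x \<le> y\<^sup>2\<close> are exactly those with \<open>y\<^sup>2 > x - 1\<close>, i.e. \<open>y > \<lfloor>\<surd>(x - 1)\<rfloor>\<close>;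
  so column \<open>x\<close> is the interval \<open>\<lfloor>\<surd>(x - 1)\<rfloor> + 1 .. x\<close> and contains \<open>a(x)\<close> points.
\<close>

definition parabola_column :: "int \<Rightarrow> int set" where
  "parabola_column x = {y. 0 < y \<and> y \<le> x \<and> x \<le> y^2}"

lemma finite_parabola_column: "finite (parabola_column x)"
  unfolding parabola_column_def by (rule finite_subset[of _ "{0..x}"]) auto

lemma le_floor_sqrt_iff:
  fixes y :: int and r :: real
  assumes "0 \<le> y"
  shows "y \<le> \<lfloor>sqrt r\<rfloor> \<longleftrightarrow> real_of_int y ^ 2 \<le> r"
proof -
  have "sqrt (real_of_int y ^ 2) = real_of_int y"
    using assms by simp
  then have "real_of_int y \<le> sqrt r \<longleftrightarrow> sqrt (real_of_int y ^ 2) \<le> sqrt r"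
    by simp
  then show ?thesis
    by (simp only: le_floor_iff real_sqrt_le_iff)
qed

lemma parabola_column_eq:
  assumes "1 \<le> x"
  shows "parabola_column x = {\<lfloor>sqrt (real_of_int x - 1)\<rfloor> + 1 .. x}"
proof -
  define k where "k = \<lfloor>sqrt (real_of_int x - 1)\<rfloor>"
  have k_nonneg: "0 \<le> k"
    using assms unfolding k_def by simp
  have square_bound_iff: "x \<le> y^2 \<longleftrightarrow> k < y" if "0 \<le> y" for y
  proof -
    have "y \<le> k \<longleftrightarrow> real_of_int (y^2) \<le> real_of_int (x - 1)"
      using le_floor_sqrt_iff[OF that, of "real_of_int x - 1"] unfolding k_def by simp
    then show ?thesis
      unfolding of_int_le_iff by linarith
  qed
  have "y \<in> parabola_column x \<longleftrightarrow> y \<in> {k + 1..x}" for y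
    using square_bound_iff[of y] k_nonneg unfolding parabola_column_def
    by (cases "0 \<le> y") auto
  then show ?thesis
    unfolding k_def by blast
qed

lemma card_parabola_column:
  assumes "1 \<le> i"
  shows "int (card (parabola_column (int i))) = a_seq i"
proof -
  define k where "k = \<lfloor>sqrt (real i - 1)\<rfloor>"
  have k_nonneg: "0 \<le> k"
    using assms unfolding k_def by simp
  have "real_of_int k ^ 2 \<le> real i - 1"
    using le_floor_sqrt_iff[OF k_nonneg, of "real i - 1"] unfolding k_def by simp
  then have "real_of_int (k^2) < real_of_int (int i)"
    by simp
  then have "k^2 < int i"
    by (simp only: of_int_less_iff)
  moreover have "k \<le> k^2"
    using k_nonneg by (cases "k = 0") (auto simp: power2_eq_square)
  ultimately have "k \<le> int i"
    by linarith
  then show ?thesis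
    using assms parabola_column_eq[of "int i"] unfolding a_seq_def k_def by simp
qed

lemma parabola_points_eq_columns:
  "{(x::int, y::int). 0 < x \<and> 0 < y \<and> y \<le> x \<and> x \<le> y^2 \<and> x \<le> int n}
     = (\<Union>i\<in>{1..n}. Pair (int i) ` parabola_column (int i))"
proof (intro set_eqI iffI)
  fix p assume "p \<in> {(x::int, y::int). 0 < x \<and> 0 < y \<and> y \<le> x \<and> x \<le> y^2 \<and> x \<le> int n}"
  then obtain x y where "p = (x, y)" "0 < x" "0 < y" "y \<le> x" "x \<le> y^2" "x \<le> int n"
    by blast
  then show "p \<in> (\<Union>i\<in>{1..n}. Pair (int i) ` parabola_column (int i))"
    unfolding parabola_column_def by (intro UN_I[of "nat x"] image_eqI[of _ _ y]) auto
qed (auto simp: parabola_column_def)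

theorem mainTheorem4:
  fixes n :: nat
  assumes "n \<ge> 1"
  shows "(\<Sum>i=1..n. a_seq i) =
         int (card {(x::int, y::int). 0 < x \<and> 0 < y \<and> y \<le> x \<and> x \<le> y^2 \<and> x \<le> int n})"
proof -
  have "card (\<Union>i\<in>{1..n}. Pair (int i) ` parabola_column (int i))
          = (\<Sum>i=1..n. card (Pair (int i) ` parabola_column (int i)))"
    using finite_parabola_column by (intro card_UN_disjoint) auto
  also have "\<dots> = (\<Sum>i=1..n. card (parabola_column (int i)))"
    by (rule sum.cong) (simp_all add: card_image inj_on_def)
  finally have "int (card (\<Union>i\<in>{1..n}. Pair (int i) ` parabola_column (int i)))
                  = (\<Sum>i=1..n. int (card (parabola_column (int i))))"
    by simp
  also have "\<dots> = (\<Sum>i=1..n. a_seq i)"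
    by (rule sum.cong) (simp_all add: card_parabola_column)
  finally show ?thesis
    unfolding parabola_points_eq_columns by (rule sym)
qed

end
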